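(* Under the assumptions of the preceding theorem (closed sum property, $\delta>0$ with $\|[g]\|_q\le\frac1\delta\|Sg\|_{L^2(\mu)}$ for all $g\in\overline H$, $\psi$ $(\sigma_R)_{R>0}$-strongly convex on bounded sets, and $\mathcal M\subset H$ uniformly bounded in summation around $c$ with radius $R$), for all $\tilde h,h\in\mathcal M$, $$F(\tilde h)-F(h)\ \ge\ -\frac{1}{2\delta^2\sigma_R}\,\|d\hat F([h],\cdot)\|_q^2 .$$
   Context: Let $(\mathcal X,\mu)$ be a finite measure space, $N\ge1$, $c\in L^\infty(\mu)$, $\psi:\mathbb R\to\mathbb R$ continuously differentiable. $\psi$ is $(\sigma_R)_{R>0}$-strongly convex on bounded sets if for each $R>0$, $\sigma_R>0$ and $\psi(\tilde s)\ge\psi(s)+\psi'(s)(\tilde s-s)+\frac{\sigma_R}{2}(\tilde s-s)^2$ for all $s,\tilde s\in(-R,R)$. Let $H_1,\dots,H_N$ be linear subspaces of $L^\infty(\mu)$, $H=H_1\times\dots\times H_N$, $Sh=\sum_i h_i$. $\mathcal M\subset H$ is uniformly bounded in summation around $c$ with radius $R$ if $\|Sh-c\|_{L^\infty(\mu)}<R$ for all $h\in\mathcal M$. $F(h)=\int(\psi(Sh-c)-Sh)\,d\mu$, $dF(h,r)=\int(\psi'(Sh-c)-1)Sr\,d\mu$. Let $\overline H_i$ be the $L^2(\mu)$-closure of $H_i$; closed sum property: $\{\sum_i g_i:g_i\in\overline H_i\}$ is closed in $L^2(\mu)$. $\overline H=\prod_i\overline H_i$ with $\|h\|_{\mathrm{sum}}=(\sum_i\|h_i\|^2_{L^2(\mu)})^{1/2}$,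 $\ker S=\{h\in\overline H:Sh=0\}$, $[h]=h+\ker S$, $\|[h]\|_q=\inf_{\tilde h\in[h]}\|\tilde h\|_{\mathrm{sum}}$, $\hat H_\infty=\{[h]:h\in H\}$, $d\hat F([h],[r])=dF(h,r)$, and $\|d\hat F([h],\cdot)\|_q=\sup\{|dF(h,r)|:r\in H,\|[r]\|_q\le1\}$. *)

theory Defs
  imports "HOL-Probability.Probability"
begin

text \<open>Functions on the measure space are real-valued functions; elements of
  L^p are represented by (measurable) functions, a.e. equality being handled
  implicitly through the seminorms / AE statements.\<close>

definition Linf :: "'a measure \<Rightarrow> ('a \<Rightarrow> real) set" where
  "Linf M = {f \<in> borel_measurable M. \<exists>C. AE x in M. \<bar>f x\<bar> \<le> C}"

definition Linf_norm :: "'a measure \<Rightarrow> ('a \<Rightarrow> real) \<Rightarrow> ereal" where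
  "Linf_norm M f = esssup M (\<lambda>x. ereal \<bar>f x\<bar>)"

definition L2 :: "'a measure \<Rightarrow> ('a \<Rightarrow> real) set" where
  "L2 M = {f \<in> borel_measurable M. integrable M (\<lambda>x. (f x)\<^sup>2)}"

definition L2_norm :: "'a measure \<Rightarrow> ('a \<Rightarrow> real) \<Rightarrow> real" where
  "L2_norm M f = sqrt (\<integral>x. (f x)\<^sup>2 \<partial>M)"

definition lin_subspace :: "('a \<Rightarrow> real) set \<Rightarrow> bool" where
  "lin_subspace V \<longleftrightarrow> (\<lambda>x. 0) \<in> V \<and>
     (\<forall>f\<in>V. \<forall>g\<in>V. (\<lambda>x. f x + g x) \<in> V) \<and>
     (\<forall>a::real. \<forall>f\<in>V. (\<lambda>x. a * f x) \<in> V)"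

definition L2_closure :: "'a measure \<Rightarrow> ('a \<Rightarrow> real) set \<Rightarrow> ('a \<Rightarrow> real) set" where
  "L2_closure M A = {g \<in> L2 M. \<forall>e>0. \<exists>a\<in>A. L2_norm M (\<lambda>x. g x - a x) < e}"

text \<open>Tuples h = (h_0,...,h_{N-1}) are functions nat => ('a => real); only i < N matter.\<close>
definition Ssum :: "nat \<Rightarrow> (nat \<Rightarrow> 'a \<Rightarrow> real) \<Rightarrow> 'a \<Rightarrow> real" where
  "Ssum N h = (\<lambda>x. \<Sum>i<N. h i x)"

definition in_prod :: "nat \<Rightarrow> (nat \<Rightarrow> ('a \<Rightarrow> real) set) \<Rightarrow> (nat \<Rightarrow> 'a \<Rightarrow> real) \<Rightarrow> bool" where
  "in_prod N V h \<longleftrightarrow> (\<forall>i<N. h i \<in> V i)"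

definition Hbar :: "'a measure \<Rightarrow> (nat \<Rightarrow> ('a \<Rightarrow> real) set) \<Rightarrow> nat \<Rightarrow> ('a \<Rightarrow> real) set" where
  "Hbar M H i = L2_closure M (H i)"

definition closed_sum_property :: "'a measure \<Rightarrow> nat \<Rightarrow> (nat \<Rightarrow> ('a \<Rightarrow> real) set) \<Rightarrow> bool" where
  "closed_sum_property M N H \<longleftrightarrow>
     (let A = {Ssum N g | g. in_prod N (Hbar M H) g} in L2_closure M A \<subseteq> A)"

definition sum_norm :: "'a measure \<Rightarrow> nat \<Rightarrow> (nat \<Rightarrow> 'a \<Rightarrow> real) \<Rightarrow> real" where
  "sum_norm M N h = sqrt (\<Sum>i<N. (L2_norm M (h i))\<^sup>2)"

text \<open>Quotient norm of [h] = h + ker S, with ker S = {g in Hbar. S g = 0 in L^2}.\<close>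
definition q_norm :: "'a measure \<Rightarrow> nat \<Rightarrow> (nat \<Rightarrow> ('a \<Rightarrow> real) set) \<Rightarrow> (nat \<Rightarrow> 'a \<Rightarrow> real) \<Rightarrow> real" where
  "q_norm M N H h = Inf {sum_norm M N g | g. in_prod N (Hbar M H) g \<and>
                          (AE x in M. Ssum N g x = Ssum N h x)}"

definition Fobj :: "'a measure \<Rightarrow> nat \<Rightarrow> (real \<Rightarrow> real) \<Rightarrow> ('a \<Rightarrow> real) \<Rightarrow> (nat \<Rightarrow> 'a \<Rightarrow> real) \<Rightarrow> real" where
  "Fobj M N \<psi> c h = (\<integral>x. \<psi> (Ssum N h x - c x) - Ssum N h x \<partial>M)"

definition dF :: "'a measure \<Rightarrow> nat \<Rightarrow> (real \<Rightarrow> real) \<Rightarrow> ('a \<Rightarrow> real) \<Rightarrow> (nat \<Rightarrow> 'a \<Rightarrow> real) \<Rightarrow> (nat \<Rightarrow> 'a \<Rightarrow> real) \<Rightarrow> real" where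
  "dF M N \<psi>' c h r = (\<integral>x. (\<psi>' (Ssum N h x - c x) - 1) * Ssum N r x \<partial>M)"

definition dF_q_norm :: "'a measure \<Rightarrow> nat \<Rightarrow> (nat \<Rightarrow> ('a \<Rightarrow> real) set) \<Rightarrow> (real \<Rightarrow> real) \<Rightarrow> ('a \<Rightarrow> real) \<Rightarrow> (nat \<Rightarrow> 'a \<Rightarrow> real) \<Rightarrow> real" where
  "dF_q_norm M N H \<psi>' c h = Sup {\<bar>dF M N \<psi>' c h r\<bar> | r. in_prod N H r \<and> q_norm M N H r \<le> 1}"

definition strongly_convex_bdd :: "(real \<Rightarrow> real) \<Rightarrow> (real \<Rightarrow> real) \<Rightarrow> (real \<Rightarrow> real) \<Rightarrow> bool" where
  "strongly_convex_bdd \<psi> \<psi>' \<sigma> \<longleftrightarrow> (\<forall>R>0. \<sigma> R > 0 \<and>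
     (\<forall>s t. \<bar>s\<bar> < R \<longrightarrow> \<bar>t\<bar> < R \<longrightarrow>
        \<psi> t \<ge> \<psi> s + \<psi>' s * (t - s) + \<sigma> R / 2 * (t - s)\<^sup>2))"

definition unif_bdd_sum :: "'a measure \<Rightarrow> nat \<Rightarrow> ('a \<Rightarrow> real) \<Rightarrow> real \<Rightarrow> (nat \<Rightarrow> 'a \<Rightarrow> real) set \<Rightarrow> bool" where
  "unif_bdd_sum M N c R Ms \<longleftrightarrow>
     (\<forall>h\<in>Ms. Linf_norm M (\<lambda>x. Ssum N h x - c x) < ereal R)"

end

theory Submission
  imports Defs
begin

text \<open>Write \<open>g = h' - h\<close>. Strong convexity of \<open>\<psi>\<close> on \<open>(-R, R)\<close>, applied pointwise and
  integrated, gives \<open>F h' - F h \<ge> dF(h, g) + \<sigma>\<^sub>R/2 \<parallel>Sg\<parallel>\<^sup>2\<close>. Since \<open>dF(h, \<cdot>)\<close> is linear and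
  \<open>\<parallel>[\<cdot>]\<parallel>\<^sub>q\<close> positively homogeneous, \<open>|dF(h, g)| \<le> \<parallel>d\<hat>F([h], \<cdot>)\<parallel>\<^sub>q \<parallel>[g]\<parallel>\<^sub>q\<close>, and
  \<open>\<parallel>[g]\<parallel>\<^sub>q \<le> \<parallel>Sg\<parallel>/\<delta>\<close> by hypothesis. Minimising the resulting quadratic in \<open>\<parallel>[g]\<parallel>\<^sub>q\<close>
  gives the bound.\<close>

lemma Linf_iff:
  "f \<in> Linf M \<longleftrightarrow> f \<in> borel_measurable M \<and> (\<exists>C\<ge>0. AE x in M. \<bar>f x\<bar> \<le> C)"
proof
  assume "f \<in> Linf M"
  then obtain C where m: "f \<in> borel_measurable M" and C: "AE x in M. \<bar>f x\<bar> \<le> C"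
    unfolding Linf_def by auto
  have "AE x in M. \<bar>f x\<bar> \<le> max C 0" using C by eventually_elim auto
  then show "f \<in> borel_measurable M \<and> (\<exists>C\<ge>0. AE x in M. \<bar>f x\<bar> \<le> C)"
    using m by (intro conjI exI[of _ "max C 0"]) auto
qed (auto simp: Linf_def)

lemma Linf_const: "(\<lambda>x. a) \<in> Linf M"
  unfolding Linf_def by auto

lemma Linf_add:
  assumes "f \<in> Linf M" "g \<in> Linf M"
  shows "(\<lambda>x. f x + g x) \<in> Linf M"
proof -
  obtain C D where "f \<in> borel_measurable M" "g \<in> borel_measurable M"
    and "AE x in M. \<bar>f x\<bar> \<le> C" "AE x in M. \<bar>g x\<bar> \<le> D"
    using assms unfolding Linf_def by auto
  moreover have "AE x in M. \<bar>f x + g x\<bar> \<le> C + D"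
    using calculation(3,4) by eventually_elim auto
  ultimately show ?thesis unfolding Linf_def by auto
qed

lemma Linf_mult:
  assumes "f \<in> Linf M" "g \<in> Linf M"
  shows "(\<lambda>x. f x * g x) \<in> Linf M"
proof -
  obtain C D where "f \<in> borel_measurable M" "g \<in> borel_measurable M" "C \<ge> 0" "D \<ge> 0"
    and "AE x in M. \<bar>f x\<bar> \<le> C" "AE x in M. \<bar>g x\<bar> \<le> D"
    using assms unfolding Linf_iff by auto
  moreover have "AE x in M. \<bar>f x * g x\<bar> \<le> C * D"
    using calculation(5,6) by eventually_elim (simp add: abs_mult mult_mono)
  ultimately show ?thesis unfolding Linf_def by auto
qed

lemma Linf_diff:
  assumes "f \<in> Linf M" "g \<in> Linf M"
  shows "(\<lambda>x. f x - g x) \<in> Linf M"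
  using Linf_add[OF assms(1) Linf_mult[OF Linf_const assms(2)], of "-1"] by simp

lemma Linf_Ssum: "(\<And>i. i < n \<Longrightarrow> h i \<in> Linf M) \<Longrightarrow> Ssum n h \<in> Linf M"
proof (induction n)
  case 0
  then show ?case by (simp add: Ssum_def Linf_const)
next
  case (Suc n)
  then have "(\<lambda>x. Ssum n h x + h n x) \<in> Linf M" by (intro Linf_add) auto
  then show ?case by (simp add: Ssum_def)
qed

lemma Linf_Ssum_in_prod:
  "in_prod N H h \<Longrightarrow> (\<And>i. i < N \<Longrightarrow> H i \<subseteq> Linf M) \<Longrightarrow> Ssum N h \<in> Linf M"
  unfolding in_prod_def by (intro Linf_Ssum) auto

lemma Linf_continuous_comp:
  assumes "f \<in> Linf M" "continuous_on UNIV \<phi>"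
  shows "(\<lambda>x. \<phi> (f x)) \<in> Linf M"
proof -
  obtain C where m: "f \<in> borel_measurable M" and C: "AE x in M. \<bar>f x\<bar> \<le> C"
    using assms(1) unfolding Linf_def by auto
  have "compact (\<phi> ` {-C..C})"
    by (intro compact_continuous_image continuous_on_subset[OF assms(2)]) auto
  then obtain B where B: "\<forall>y\<in>\<phi> ` {-C..C}. \<bar>y\<bar> \<le> B"
    using compact_imp_bounded bounded_real by metis
  have "AE x in M. \<bar>\<phi> (f x)\<bar> \<le> B"
    using C by eventually_elim (use B in \<open>auto simp: abs_le_iff\<close>)
  moreover have "(\<lambda>x. \<phi> (f x)) \<in> borel_measurable M"
    by (rule borel_measurable_continuous_on[OF assms(2) m])
  ultimately show ?thesis unfolding Linf_def by auto
qed

lemma Linf_integrable: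
  assumes "finite_measure M" "f \<in> Linf M"
  shows "integrable M f"
proof -
  obtain C where m: "f \<in> borel_measurable M" and C: "AE x in M. \<bar>f x\<bar> \<le> C"
    using assms(2) unfolding Linf_def by auto
  show ?thesis
    by (rule finite_measure.integrable_const_bound[OF assms(1) _ m, of C]) (use C in auto)
qed

lemma Linf_L2:
  assumes "finite_measure M" "f \<in> Linf M"
  shows "f \<in> L2 M"
proof -
  have "(\<lambda>x. (f x)\<^sup>2) \<in> Linf M"
    using Linf_mult[OF assms(2) assms(2)] by (simp add: power2_eq_square)
  then show ?thesis using assms Linf_integrable unfolding L2_def Linf_def by blast
qed

lemma AE_abs_less_of_Linf_norm_less:
  assumes "Linf_norm M f < ereal R"
  shows "AE x in M. \<bar>f x\<bar> < R"
proof -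
  have "AE x in M. ereal \<bar>f x\<bar> \<le> Linf_norm M f"
    unfolding Linf_norm_def by (rule esssup_AE)
  then show ?thesis
  proof eventually_elim
    case (elim x)
    then have "ereal \<bar>f x\<bar> < ereal R" using assms by (rule le_less_trans)
    then show ?case by simp
  qed
qed

lemma lin_subspace_scale: "lin_subspace V \<Longrightarrow> f \<in> V \<Longrightarrow> (\<lambda>x. a * f x) \<in> V"
  unfolding lin_subspace_def by blast

lemma lin_subspace_diff:
  assumes "lin_subspace V" "f \<in> V" "g \<in> V"
  shows "(\<lambda>x. f x - g x) \<in> V"
proof -
  have neg: "(\<lambda>x. (-1) * g x) \<in> V" using lin_subspace_scale assms(1,3) by blast
  have "\<forall>f\<in>V. \<forall>g\<in>V. (\<lambda>x. f x + g x) \<in> V" using assms(1) unfolding lin_subspace_def by blast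
  from this[rule_format, OF assms(2) neg] show ?thesis by simp
qed

lemma Ssum_scale: "Ssum N (\<lambda>i x. t * k i x) = (\<lambda>x. t * Ssum N k x)"
  unfolding Ssum_def by (simp add: sum_distrib_left)

lemma Ssum_diff: "Ssum N (\<lambda>i x. f i x - g i x) x = Ssum N f x - Ssum N g x"
  unfolding Ssum_def by (simp add: sum_subtractf)

lemma L2_norm_scale: "L2_norm M (\<lambda>x. t * f x) = \<bar>t\<bar> * L2_norm M f"
  unfolding L2_norm_def by (simp add: power_mult_distrib real_sqrt_mult)

lemma L2_norm_sq: "(L2_norm M f)\<^sup>2 = (\<integral>x. (f x)\<^sup>2 \<partial>M)"
  unfolding L2_norm_def by (simp add: integral_nonneg_AE)

lemma sum_norm_scale: "sum_norm M N (\<lambda>i x. t * k i x) = \<bar>t\<bar> * sum_norm M N k"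
  unfolding sum_norm_def
  by (simp add: L2_norm_scale power_mult_distrib sum_distrib_left[symmetric] real_sqrt_mult)

lemma sum_norm_nonneg: "sum_norm M N k \<ge> 0"
  unfolding sum_norm_def by (simp add: sum_nonneg)

lemma sum_norm_sq: "(sum_norm M N k)\<^sup>2 = (\<Sum>i<N. \<integral>x. (k i x)\<^sup>2 \<partial>M)"
  unfolding sum_norm_def by (simp add: sum_nonneg L2_norm_sq)

lemma L2_closure_scale:
  assumes "lin_subspace V" "g \<in> L2_closure M V" "t \<noteq> 0"
  shows "(\<lambda>x. t * g x) \<in> L2_closure M V"
proof -
  have "g \<in> L2 M" using assms(2) unfolding L2_closure_def by auto
  then have "(\<lambda>x. t * g x) \<in> L2 M" unfolding L2_def by (auto simp: power_mult_distrib)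
  moreover have "\<exists>a\<in>V. L2_norm M (\<lambda>x. t * g x - a x) < e" if "e > 0" for e
  proof -
    have "e / \<bar>t\<bar> > 0" using \<open>e > 0\<close> assms(3) by simp
    then obtain a where a: "a \<in> V" "L2_norm M (\<lambda>x. g x - a x) < e / \<bar>t\<bar>"
      using assms(2) unfolding L2_closure_def by blast
    have "L2_norm M (\<lambda>x. t * g x - t * a x) = \<bar>t\<bar> * L2_norm M (\<lambda>x. g x - a x)"
      using L2_norm_scale[of M t "\<lambda>x. g x - a x"] by (simp add: algebra_simps)
    also have "\<dots> < e" using a(2) assms(3) by (simp add: field_simps)
    finally show ?thesis using lin_subspace_scale[OF assms(1) a(1), of t] by (intro bexI)
  qed
  ultimately show ?thesis unfolding L2_closure_def by blast
qed

lemma in_prod_Hbar: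
  assumes "finite_measure M" "\<And>i. i < N \<Longrightarrow> H i \<subseteq> Linf M" "in_prod N H g"
  shows "in_prod N (Hbar M H) g"
proof -
  have "f \<in> L2_closure M A" if "f \<in> Linf M" "f \<in> A" for f A
    using Linf_L2[OF assms(1) that(1)] that(2) unfolding L2_closure_def L2_norm_def by force
  then show ?thesis using assms(2,3) unfolding in_prod_def Hbar_def by blast
qed

definition quot_class :: "'a measure \<Rightarrow> nat \<Rightarrow> (nat \<Rightarrow> ('a \<Rightarrow> real) set) \<Rightarrow>
    (nat \<Rightarrow> 'a \<Rightarrow> real) \<Rightarrow> (nat \<Rightarrow> 'a \<Rightarrow> real) set" where
  "quot_class M N H h = {g. in_prod N (Hbar M H) g \<and> (AE x in M. Ssum N g x = Ssum N h x)}"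

lemma q_norm_eq_Inf: "q_norm M N H h = Inf (sum_norm M N ` quot_class M N H h)"
  unfolding q_norm_def quot_class_def by (simp add: setcompr_eq_image)

lemma bdd_below_sum_norm: "bdd_below (sum_norm M N ` A)"
  using sum_norm_nonneg by (intro bdd_belowI2[of _ 0]) auto

lemma quot_class_nonempty:
  "finite_measure M \<Longrightarrow> (\<And>i. i < N \<Longrightarrow> H i \<subseteq> Linf M) \<Longrightarrow> in_prod N H h \<Longrightarrow>
    quot_class M N H h \<noteq> {}"
  using in_prod_Hbar unfolding quot_class_def by blast

lemma q_norm_nonneg:
  assumes "finite_measure M" "\<And>i. i < N \<Longrightarrow> H i \<subseteq> Linf M" "in_prod N H h"
  shows "q_norm M N H h \<ge> 0"
  unfolding q_norm_eq_Inf using quot_class_nonempty[OF assms] sum_norm_nonneg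
  by (intro cInf_greatest) auto

lemma q_norm_scale:
  assumes fm: "finite_measure M" and H: "\<And>i. i < N \<Longrightarrow> lin_subspace (H i) \<and> H i \<subseteq> Linf M"
    and g: "in_prod N H g" and t: "t > 0"
  shows "q_norm M N H (\<lambda>i x. t * g i x) \<le> t * q_norm M N H g"
proof -
  have "q_norm M N H (\<lambda>i x. t * g i x) / t \<le> sum_norm M N k" if k: "k \<in> quot_class M N H g" for k
  proof -
    have "(\<lambda>i x. t * k i x) \<in> quot_class M N H (\<lambda>i x. t * g i x)"
      using k H t unfolding quot_class_def in_prod_def Hbar_def
      by (auto intro!: L2_closure_scale elim!: eventually_mono simp: Ssum_scale)
    then have "q_norm M N H (\<lambda>i x. t * g i x) \<le> sum_norm M N (\<lambda>i x. t * k i x)"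
      unfolding q_norm_eq_Inf by (intro cInf_lower imageI bdd_below_sum_norm)
    then show ?thesis using t by (simp add: sum_norm_scale field_simps)
  qed
  then have "q_norm M N H (\<lambda>i x. t * g i x) / t \<le> q_norm M N H g"
    unfolding q_norm_eq_Inf[of M N H g] using quot_class_nonempty[OF fm _ g] H
    by (intro cInf_greatest) auto
  then show ?thesis using t by (simp add: field_simps)
qed

lemma dF_scale: "dF M N \<psi>' c h (\<lambda>i x. t * g i x) = t * dF M N \<psi>' c h g"
  unfolding dF_def Ssum_scale by (simp add: ac_simps)

text \<open>Pointwise \<open>|a| \<le> (1 + a\<^sup>2)/2\<close> turns an \<open>L\<^sup>2\<close> bound on the components into an \<open>L\<^sup>1\<close> bound
  on the sum, without Cauchy--Schwarz.\<close>

lemma integral_abs_Ssum_le: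
  assumes fm: "finite_measure M" and k: "\<And>i. i < N \<Longrightarrow> k i \<in> L2 M"
  shows "integrable M (\<lambda>x. \<bar>Ssum N k x\<bar>)"
    and "(\<integral>x. \<bar>Ssum N k x\<bar> \<partial>M) \<le> (real N * measure M (space M) + (sum_norm M N k)\<^sup>2) / 2"
proof -
  define G where "G = (\<lambda>x. \<Sum>i<N. (1 + (k i x)\<^sup>2) / 2)"
  have int_comp: "integrable M (\<lambda>x. (1 + (k i x)\<^sup>2) / 2)" if "i < N" for i
    using k[OF that] finite_measure.integrable_const[OF fm] unfolding L2_def
    by (intro integrable_divide_zero Bochner_Integration.integrable_add) auto
  then have int_G: "integrable M G" unfolding G_def by auto
  have G_ge: "\<bar>Ssum N k x\<bar> \<le> G x" for x
  proof -
    have half_sq: "\<bar>a\<bar> \<le> (1 + a\<^sup>2) / 2" for a :: real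
      using zero_le_power2[of "\<bar>a\<bar> - 1"] by (simp add: power2_eq_square algebra_simps)
    have "\<bar>Ssum N k x\<bar> \<le> (\<Sum>i<N. \<bar>k i x\<bar>)" unfolding Ssum_def by (rule sum_abs)
    also have "\<dots> \<le> G x" unfolding G_def by (intro sum_mono half_sq)
    finally show ?thesis .
  qed
  have "Ssum N k \<in> borel_measurable M"
    using k unfolding Ssum_def L2_def by (intro borel_measurable_sum) auto
  then show int_abs: "integrable M (\<lambda>x. \<bar>Ssum N k x\<bar>)"
    by (intro Bochner_Integration.integrable_bound[OF int_G])
      (use G_ge in \<open>auto intro: order_trans[OF _ abs_ge_self]\<close>)
  have "(\<integral>x. \<bar>Ssum N k x\<bar> \<partial>M) \<le> (\<integral>x. G x \<partial>M)"
    by (intro integral_mono[OF int_abs int_G] G_ge)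
  also have "\<dots> = (\<Sum>i<N. (measure M (space M) + (\<integral>x. (k i x)\<^sup>2 \<partial>M)) / 2)"
  proof -
    have "(\<integral>x. 1 + (k i x)\<^sup>2 \<partial>M) = measure M (space M) + (\<integral>x. (k i x)\<^sup>2 \<partial>M)"
      if "i < N" for i
      using k[OF that] finite_measure.integrable_const[OF fm] unfolding L2_def
      by (subst Bochner_Integration.integral_add) auto
    then show ?thesis
      unfolding G_def using int_comp by (subst Bochner_Integration.integral_sum) auto
  qed
  also have "\<dots> = (real N * measure M (space M) + (sum_norm M N k)\<^sup>2) / 2"
    by (simp add: sum_norm_sq sum.distrib sum_divide_distrib[symmetric])
  finally show "(\<integral>x. \<bar>Ssum N k x\<bar> \<partial>M) \<le> (real N * measure M (space M) + (sum_norm M N k)\<^sup>2) / 2" .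
qed

lemma bdd_above_dF_q_ball:
  assumes fm: "finite_measure M" and H: "\<And>i. i < N \<Longrightarrow> H i \<subseteq> Linf M"
    and \<psi>': "(\<lambda>x. \<psi>' (Ssum N h x - c x)) \<in> Linf M"
  shows "bdd_above {\<bar>dF M N \<psi>' c h r\<bar> | r. in_prod N H r \<and> q_norm M N H r \<le> 1}"
proof -
  define \<phi> where "\<phi> = (\<lambda>x. \<psi>' (Ssum N h x - c x) - 1)"
  have "\<phi> \<in> Linf M" unfolding \<phi>_def by (intro Linf_diff \<psi>' Linf_const)
  then obtain K where K: "K \<ge> 0" "AE x in M. \<bar>\<phi> x\<bar> \<le> K" unfolding Linf_iff by auto
  have "\<bar>dF M N \<psi>' c h r\<bar> \<le> K * (real N * measure M (space M) + 4) / 2"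
    if r: "in_prod N H r" "q_norm M N H r \<le> 1" for r
  proof -
    have "q_norm M N H r < 2" using r by simp
    then have "\<exists>z\<in>sum_norm M N ` quot_class M N H r. z < 2"
      using cInf_less_iff[OF _ bdd_below_sum_norm] quot_class_nonempty[OF fm H r(1)]
      unfolding q_norm_eq_Inf by blast
    then obtain k where k: "k \<in> quot_class M N H r" "sum_norm M N k < 2" by blast
    have k_L2: "\<And>i. i < N \<Longrightarrow> k i \<in> L2 M"
      using k(1) unfolding quot_class_def in_prod_def Hbar_def L2_closure_def by auto
    have r_Linf: "Ssum N r \<in> Linf M" using Linf_Ssum_in_prod[OF r(1) H] .
    have "\<bar>dF M N \<psi>' c h r\<bar> \<le> (\<integral>x. \<bar>\<phi> x * Ssum N r x\<bar> \<partial>M)"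
      using integral_norm_bound[of M "\<lambda>x. \<phi> x * Ssum N r x"] unfolding dF_def \<phi>_def by simp
    also have "\<dots> \<le> (\<integral>x. K * \<bar>Ssum N r x\<bar> \<partial>M)"
    proof (rule integral_mono_AE)
      show "integrable M (\<lambda>x. \<bar>\<phi> x * Ssum N r x\<bar>)"
        by (intro integrable_abs Linf_integrable[OF fm] Linf_mult \<open>\<phi> \<in> Linf M\<close> r_Linf)
      show "integrable M (\<lambda>x. K * \<bar>Ssum N r x\<bar>)"
        using Linf_integrable[OF fm r_Linf] by auto
      show "AE x in M. \<bar>\<phi> x * Ssum N r x\<bar> \<le> K * \<bar>Ssum N r x\<bar>"
        using K(2) by eventually_elim (simp add: abs_mult mult_right_mono)
    qed
    also have "\<dots> = K * (\<integral>x. \<bar>Ssum N k x\<bar> \<partial>M)"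
    proof -
      have "Ssum N r \<in> borel_measurable M" using r_Linf unfolding Linf_def by blast
      moreover have "Ssum N k \<in> borel_measurable M"
        using k_L2 unfolding Ssum_def L2_def by (intro borel_measurable_sum) auto
      ultimately have "(\<integral>x. \<bar>Ssum N r x\<bar> \<partial>M) = (\<integral>x. \<bar>Ssum N k x\<bar> \<partial>M)"
        using k(1) unfolding quot_class_def by (intro integral_cong_AE) auto
      then show ?thesis by simp
    qed
    also have "\<dots> \<le> K * ((real N * measure M (space M) + (sum_norm M N k)\<^sup>2) / 2)"
      using K(1) integral_abs_Ssum_le(2)[OF fm k_L2] by (rule mult_left_mono[rotated])
    also have "\<dots> \<le> K * ((real N * measure M (space M) + 2\<^sup>2) / 2)"
    proof -
      have "(sum_norm M N k)\<^sup>2 \<le> 2\<^sup>2"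
        using k(2) sum_norm_nonneg[of M N k] by (intro power_mono) auto
      then show ?thesis using K(1) by (intro mult_left_mono) auto
    qed
    finally show ?thesis by simp
  qed
  then show ?thesis by (intro bdd_aboveI[of _ "K * (real N * measure M (space M) + 4) / 2"]) auto
qed

lemma abs_le_Sup_mul_gauge:
  fixes f p :: "'b \<Rightarrow> real"
  assumes bdd: "bdd_above {\<bar>f r\<bar> | r. P r \<and> p r \<le> 1}"
    and px: "p x \<ge> 0"
    and scale: "\<And>t. t > 0 \<Longrightarrow> \<exists>y. P y \<and> p y \<le> t * p x \<and> f y = t * f x"
  shows "\<bar>f x\<bar> \<le> Sup {\<bar>f r\<bar> | r. P r \<and> p r \<le> 1} * p x"
proof -
  define S where "S = Sup {\<bar>f r\<bar> | r. P r \<and> p r \<le> 1}"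
  have near: "\<bar>f x\<bar> \<le> S * (p x + u)" if u: "u > 0" for u
  proof -
    define t where "t = 1 / (p x + u)"
    have t: "t > 0" "t * p x \<le> 1" using px u unfolding t_def by (auto simp: field_simps)
    obtain y where y: "P y" "p y \<le> t * p x" "f y = t * f x" using scale[OF t(1)] by blast
    have "\<bar>f y\<bar> \<in> {\<bar>f r\<bar> | r. P r \<and> p r \<le> 1}" using y(1) order_trans[OF y(2) t(2)] by blast
    then have "\<bar>f y\<bar> \<le> S" unfolding S_def by (rule cSup_upper[OF _ bdd])
    then show ?thesis using y(3) t(1) px u unfolding t_def by (simp add: abs_mult field_simps)
  qed
  have "0 \<le> S * (p x + 1)" using near[of 1] by (meson abs_ge_zero order_trans zero_less_one)
  then have "S \<ge> 0" using px by (simp add: zero_le_mult_iff)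
  show ?thesis unfolding S_def[symmetric]
  proof (rule field_le_epsilon)
    fix e :: real assume "e > 0"
    have "\<bar>f x\<bar> \<le> S * (p x + e / (S + 1))" using near \<open>e > 0\<close> \<open>S \<ge> 0\<close> by simp
    also have "\<dots> \<le> S * p x + e"
      using \<open>e > 0\<close> \<open>S \<ge> 0\<close> by (simp add: field_simps)
    finally show "\<bar>f x\<bar> \<le> S * p x + e" .
  qed
qed

lemma abs_dF_le_dF_q_norm_mul_q_norm:
  assumes fm: "finite_measure M" and H: "\<And>i. i < N \<Longrightarrow> lin_subspace (H i) \<and> H i \<subseteq> Linf M"
    and \<psi>': "(\<lambda>x. \<psi>' (Ssum N h x - c x)) \<in> Linf M"
    and g: "in_prod N H g"
  shows "\<bar>dF M N \<psi>' c h g\<bar> \<le> dF_q_norm M N H \<psi>' c h * q_norm M N H g"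
  unfolding dF_q_norm_def
proof (rule abs_le_Sup_mul_gauge)
  show "bdd_above {\<bar>dF M N \<psi>' c h r\<bar> | r. in_prod N H r \<and> q_norm M N H r \<le> 1}"
    by (rule bdd_above_dF_q_ball[OF fm _ \<psi>']) (use H in blast)
  show "q_norm M N H g \<ge> 0" using q_norm_nonneg[OF fm _ g] H by blast
  fix t :: real assume "t > 0"
  then show "\<exists>y. in_prod N H y \<and> q_norm M N H y \<le> t * q_norm M N H g
      \<and> dF M N \<psi>' c h y = t * dF M N \<psi>' c h g"
  proof (intro exI conjI)
    show "in_prod N H (\<lambda>i x. t * g i x)"
      using g H lin_subspace_scale unfolding in_prod_def by blast
  qed (use \<open>t > 0\<close> q_norm_scale[OF fm H g] dF_scale in auto)
qed

lemma Fobj_diff_ge_dF_add_sq: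
  assumes fm: "finite_measure M" and c: "c \<in> Linf M"
    and h: "Ssum N h \<in> Linf M" and h': "Ssum N h' \<in> Linf M"
    and cont: "continuous_on UNIV \<psi>" "continuous_on UNIV \<psi>'"
    and conv: "strongly_convex_bdd \<psi> \<psi>' \<sigma>" "R > 0"
    and bound: "AE x in M. \<bar>Ssum N h x - c x\<bar> < R" "AE x in M. \<bar>Ssum N h' x - c x\<bar> < R"
  defines "g \<equiv> \<lambda>i x. h' i x - h i x"
  shows "Fobj M N \<psi> c h' - Fobj M N \<psi> c h
           \<ge> dF M N \<psi>' c h g + \<sigma> R / 2 * (L2_norm M (Ssum N g))\<^sup>2"
proof -
  define s where "s = (\<lambda>x. Ssum N h x - c x)"
  define s' where "s' = (\<lambda>x. Ssum N h' x - c x)"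
  have Sg: "Ssum N g x = s' x - s x" for x unfolding g_def Ssum_diff s_def s'_def by simp
  have s: "s \<in> Linf M" "s' \<in> Linf M" unfolding s_def s'_def using Linf_diff c h h' by auto
  have Sg_Linf: "Ssum N g \<in> Linf M" unfolding Sg[abs_def] by (intro Linf_diff s)
  have int_F: "integrable M (\<lambda>x. \<psi> (s x) - Ssum N h x)" "integrable M (\<lambda>x. \<psi> (s' x) - Ssum N h' x)"
    by (intro Linf_integrable[OF fm] Linf_diff Linf_continuous_comp[OF _ cont(1)] s h h')+
  have int_dF: "integrable M (\<lambda>x. (\<psi>' (s x) - 1) * Ssum N g x)"
    by (intro Linf_integrable[OF fm] Linf_mult Linf_diff
        Linf_continuous_comp[OF s(1) cont(2)] Linf_const Sg_Linf)
  have int_sq: "integrable M (\<lambda>x. (Ssum N g x)\<^sup>2)"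
    using Linf_integrable[OF fm Linf_mult[OF Sg_Linf Sg_Linf]] by (simp add: power2_eq_square)
  have "dF M N \<psi>' c h g + \<sigma> R / 2 * (L2_norm M (Ssum N g))\<^sup>2
      = (\<integral>x. (\<psi>' (s x) - 1) * Ssum N g x + \<sigma> R / 2 * (Ssum N g x)\<^sup>2 \<partial>M)"
    unfolding dF_def L2_norm_sq s_def using int_dF int_sq by (simp add: s_def)
  also have "\<dots> \<le> (\<integral>x. (\<psi> (s' x) - Ssum N h' x) - (\<psi> (s x) - Ssum N h x) \<partial>M)"
  proof (rule integral_mono_AE)
    show "AE x in M. (\<psi>' (s x) - 1) * Ssum N g x + \<sigma> R / 2 * (Ssum N g x)\<^sup>2
        \<le> (\<psi> (s' x) - Ssum N h' x) - (\<psi> (s x) - Ssum N h x)"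
      using bound
    proof eventually_elim
      case (elim x)
      then have "\<psi> (s' x) \<ge> \<psi> (s x) + \<psi>' (s x) * (s' x - s x) + \<sigma> R / 2 * (s' x - s x)\<^sup>2"
        using conv unfolding strongly_convex_bdd_def s_def s'_def by blast
      then show ?case unfolding Sg by (simp add: s_def s'_def algebra_simps)
    qed
  qed (use int_F int_dF int_sq in auto)
  also have "\<dots> = Fobj M N \<psi> c h' - Fobj M N \<psi> c h"
    unfolding Fobj_def using int_F by (simp add: s_def s'_def)
  finally show ?thesis .
qed

lemma quadratic_lower_bound:
  fixes \<Delta> d D q L \<delta> \<sigma> :: real
  assumes "\<Delta> \<ge> d + \<sigma> / 2 * L\<^sup>2" "\<bar>d\<bar> \<le> D * q" "q \<le> 1 / \<delta> * L"
    and "q \<ge> 0" "\<delta> > 0" "\<sigma> > 0"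
  shows "\<Delta> \<ge> - 1 / (2 * \<delta>\<^sup>2 * \<sigma>) * D\<^sup>2"
proof -
  define b where "b = \<sigma> / 2 * \<delta>\<^sup>2"
  have "b > 0" using assms(5,6) unfolding b_def by simp
  have "(\<delta> * q)\<^sup>2 \<le> L\<^sup>2"
    using assms(3-5) by (intro power_mono) (auto simp: field_simps)
  then have "\<sigma> / 2 * (\<delta> * q)\<^sup>2 \<le> \<sigma> / 2 * L\<^sup>2" using assms(6) by simp
  moreover have "b * q\<^sup>2 = \<sigma> / 2 * (\<delta> * q)\<^sup>2" unfolding b_def by (simp add: power_mult_distrib)
  ultimately have "\<Delta> \<ge> - (D * q) + b * q\<^sup>2"
    using assms(1,2) abs_ge_minus_self[of d] by linarith
  moreover have "4 * b * (- (D * q) + b * q\<^sup>2) \<ge> - D\<^sup>2"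
    using zero_le_power2[of "2 * b * q - D"] by (simp add: power2_eq_square algebra_simps)
  then have "- (D * q) + b * q\<^sup>2 \<ge> - D\<^sup>2 / (4 * b)"
    using \<open>b > 0\<close> by (simp add: field_simps)
  moreover have "- D\<^sup>2 / (4 * b) = - 1 / (2 * \<delta>\<^sup>2 * \<sigma>) * D\<^sup>2"
    unfolding b_def by (simp add: field_simps)
  ultimately show ?thesis by linarith
qed

theorem mainTheorem6:
  fixes M :: "'a measure" and N :: nat and c :: "'a \<Rightarrow> real"
    and \<psi> \<psi>' :: "real \<Rightarrow> real" and \<sigma> :: "real \<Rightarrow> real"
    and H :: "nat \<Rightarrow> ('a \<Rightarrow> real) set"
    and Ms :: "(nat \<Rightarrow> 'a \<Rightarrow> real) set" and \<delta> R :: real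
  assumes "finite_measure M"
    and "N \<ge> 1"
    and "c \<in> Linf M"
    and "\<And>s. (\<psi> has_real_derivative \<psi>' s) (at s)"
    and "continuous_on UNIV \<psi>'"
    and "\<And>i. i < N \<Longrightarrow> lin_subspace (H i) \<and> H i \<subseteq> Linf M"
    and "closed_sum_property M N H"
    and "\<delta> > 0"
    and "\<And>g. in_prod N (Hbar M H) g \<Longrightarrow> q_norm M N H g \<le> 1 / \<delta> * L2_norm M (Ssum N g)"
    and "strongly_convex_bdd \<psi> \<psi>' \<sigma>"
    and "R > 0"
    and "\<And>h. h \<in> Ms \<Longrightarrow> in_prod N H h"
    and "unif_bdd_sum M N c R Ms"
  shows "\<forall>h' \<in> Ms. \<forall>h \<in> Ms.
           Fobj M N \<psi> c h' - Fobj M N \<psi> c h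
             \<ge> - 1 / (2 * \<delta>\<^sup>2 * \<sigma> R) * (dF_q_norm M N H \<psi>' c h)\<^sup>2"
proof (intro ballI)
  fix h' h assume "h' \<in> Ms" "h \<in> Ms"
  then have hH: "in_prod N H h" "in_prod N H h'" using assms(12) by auto
  have HL: "\<And>i. i < N \<Longrightarrow> H i \<subseteq> Linf M" using assms(6) by blast
  define g where "g = (\<lambda>i x. h' i x - h i x)"
  have gH: "in_prod N H g"
    using hH assms(6) lin_subspace_diff unfolding in_prod_def g_def by blast
  have bound: "AE x in M. \<bar>Ssum N h x - c x\<bar> < R" "AE x in M. \<bar>Ssum N h' x - c x\<bar> < R"
    using assms(13) \<open>h \<in> Ms\<close> \<open>h' \<in> Ms\<close> AE_abs_less_of_Linf_norm_less
    unfolding unif_bdd_sum_def by blast+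
  have "continuous_on UNIV \<psi>"
    using assms(4) DERIV_isCont continuous_at_imp_continuous_on by blast
  then have descent: "Fobj M N \<psi> c h' - Fobj M N \<psi> c h
      \<ge> dF M N \<psi>' c h g + \<sigma> R / 2 * (L2_norm M (Ssum N g))\<^sup>2"
    unfolding g_def using Linf_Ssum_in_prod[OF _ HL] hH bound assms(1,3,5,10,11)
    by (intro Fobj_diff_ge_dF_add_sq) auto
  have "\<bar>dF M N \<psi>' c h g\<bar> \<le> dF_q_norm M N H \<psi>' c h * q_norm M N H g"
    using Linf_continuous_comp[OF Linf_diff[OF Linf_Ssum_in_prod[OF hH(1) HL] assms(3)] assms(5)]
    by (intro abs_dF_le_dF_q_norm_mul_q_norm assms(1,6) gH)
  moreover have "\<sigma> R > 0" using assms(10,11) unfolding strongly_convex_bdd_def by blast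
  ultimately show "Fobj M N \<psi> c h' - Fobj M N \<psi> c h
      \<ge> - 1 / (2 * \<delta>\<^sup>2 * \<sigma> R) * (dF_q_norm M N H \<psi>' c h)\<^sup>2"
    using quadratic_lower_bound[OF descent] q_norm_nonneg[OF assms(1) HL gH]
      assms(8,9) in_prod_Hbar[OF assms(1) HL gH] by blast
qed

end
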